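(* Let $m\ge3$ and let $\lambda_1$ be a $\mathbb{Z}_2$-characteristic map over $P_m$ whose $\mathbf b\mathbf c$-pieces are $s_1,\dots,s_k$ (so that, cyclically, $\lambda_1=\mathbf a s_1\mathbf a s_2\mathbf a\cdots\mathbf a s_k$ with $k=|\lambda_1^{-1}(\mathbf a)|$). Let $p\neq q$ be vertices with $\lambda_1(p)=\lambda_1(q)=\mathbf a$. For each $i$ let $\phi_i,\psi_i$ each be either the identity or the inversion, and let $\lambda_2=\mathbf a\phi_1(s_1)\mathbf a\cdots\mathbf a\phi_k(s_k)$, $\lambda_3=\mathbf a\psi_1(s_1)\mathbf a\cdots\mathbf a\psi_k(s_k)$, and $\lambda_4=\mathbf a\psi_1(\phi_1(s_1))\mathbf a\cdots\mathbf a\psi_k(\phi_k(s_k))$. Then there exists a $\mathbb{Z}_2$-characteristic map $\Lambda$ over $\mathrm{wed}_{p,q}P_m$ with $\operatorname{proj}_{\{p_2,q_2\}}\Lambda\simeq\lambda_1$, $\operatorname{proj}_{\{p_1,q_2\}}\Lambda\simeq\lambda_2$, $\operatorname{proj}_{\{p_2,q_1\}}\Lambda\simeq\lambda_3$, $\operatorname{proj}_{\{p_1,q_1\}}\Lambda\simeq\lambda_4$; i.e. the edges $\{\lambda_1,\lambda_2,p\}$ and $\{\lambda_1,\lambda_3,q\}$ span a realizable square with fourth node $\lambda_4$. (Every D-J class $p$-adjacent (resp. $q$-adjacent) to $\lambda_1$ has a representative of the form of $\lambda_2$ (resp. $\lambda_3$), so any two such edges span a realizable square.)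
   Context: $P_m$: simplicial complex on $[m]$ with facets $\{i,i+1\}$ mod $m$. $\mathbf a=(1,0)^T,\mathbf b=(0,1)^T,\mathbf c=(1,1)^T$; a $\mathbb{Z}_2$-characteristic map over $P_m$ is a cyclic word $\lambda\colon[m]\to\{\mathbf a,\mathbf b,\mathbf c\}$ with cyclically consecutive letters distinct; D-J equivalence ($\simeq$) is composition with $GL(2,\mathbb{Z}_2)$ (permutations of letters). $\mathbf b\mathbf c$-pieces: restrictions of $\lambda$ to maximal cyclic intervals of $[m]\setminus\lambda^{-1}(\mathbf a)$; inversion swaps $\mathbf b,\mathbf c$ on a piece. For a simplicial complex $K$ and vertices $p\ne q$, $\mathrm{wed}_{p,q}K$ has vertex set $(V\setminus\{p,q\})\cup\{p_1,p_2,q_1,q_2\}$ and minimal non-faces obtained from those of $K$ by replacing $p$ by $p_1,p_2$ and $q$ by $q_1,q_2$ whenever they occur. A $\mathbb{Z}_2$-characteristic map over an $(n-1)$-dimensional complex is a map to $\mathbb{Z}_2^n$ sending vertices of each face to linearly independent vectors. For a face $\sigma$, $\operatorname{proj}_\sigma\Lambda(w)=[\Lambda(w)]\in\mathbb{Z}_2^n/\langle\Lambda(v):v\in\sigma\rangle$ on $\operatorname{lk}\sigma$. The link of $\{p_i,q_j\}$ in $\mathrm{wed}_{p,q}P_m$ is identified with $P_m$ via $p_{3-i}\mapsto p$, $q_{3-j}\mapsto q$, identity elsewhere. *)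

theory Defs
  imports "HOL-Analysis.Analysis" "HOL-Library.Z2"
begin

definition min_nonfaces :: "'v set \<Rightarrow> 'v set set \<Rightarrow> 'v set set" where
  "min_nonfaces V K = {\<sigma>. \<sigma> \<subseteq> V \<and> \<sigma> \<notin> K \<and> (\<forall>\<tau>. \<tau> \<subset> \<sigma> \<longrightarrow> \<tau> \<in> K)}"

text \<open>Vertices of the wedge: an old vertex v is (v,0); p_i is (p,i), q_j is (q,j), i,j in {1,2}.\<close>

definition wed_vertices :: "'v set \<Rightarrow> 'v \<Rightarrow> 'v \<Rightarrow> ('v \<times> nat) set" where
  "wed_vertices V p q = (\<lambda>v. (v, 0)) ` (V - {p, q}) \<union> {(p,1), (p,2), (q,1), (q,2)}"

definition wed_replace :: "'v \<Rightarrow> 'v \<Rightarrow> 'v set \<Rightarrow> ('v \<times> nat) set" where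
  "wed_replace p q \<sigma> = (\<lambda>v. (v, 0)) ` (\<sigma> - {p, q})
      \<union> (if p \<in> \<sigma> then {(p,1), (p,2)} else {})
      \<union> (if q \<in> \<sigma> then {(q,1), (q,2)} else {})"

text \<open>The complex on the wedge vertex set whose minimal non-faces are the replaced
  minimal non-faces of K: faces are the vertex subsets containing none of them.\<close>

definition wed :: "'v set \<Rightarrow> 'v set set \<Rightarrow> 'v \<Rightarrow> 'v \<Rightarrow> ('v \<times> nat) set set" where
  "wed V K p q = {\<tau>. \<tau> \<subseteq> wed_vertices V p q \<and>
       (\<forall>\<sigma>\<in>min_nonfaces V K. \<not> wed_replace p q \<sigma> \<subseteq> \<tau>)}"

definition cyc_next :: "nat \<Rightarrow> nat \<Rightarrow> nat" where
  "cyc_next m i = i mod m + 1"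

definition P_cycle :: "nat \<Rightarrow> nat set set" where
  "P_cycle m = {\<sigma>. \<exists>i\<in>{1..m}. \<sigma> \<subseteq> {i, cyc_next m i}}"

definition char_map :: "'v set set \<Rightarrow> ('v \<Rightarrow> bit ^ 'n) \<Rightarrow> bool" where
  "char_map K \<Lambda> \<longleftrightarrow> (\<forall>\<sigma>\<in>K. inj_on \<Lambda> \<sigma> \<and> vec.independent (\<Lambda> ` \<sigma>))"

definition va :: "bit ^ 2" where "va = vector [1, 0]"
definition vb :: "bit ^ 2" where "vb = vector [0, 1]"
definition vc :: "bit ^ 2" where "vc = vector [1, 1]"

text \<open>Z_2-characteristic map over P_m as a cyclic word in a,b,c with cyclically
  consecutive letters distinct.\<close>

definition char_word :: "nat \<Rightarrow> (nat \<Rightarrow> bit ^ 2) \<Rightarrow> bool" where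
  "char_word m w \<longleftrightarrow> (\<forall>i\<in>{1..m}. w i \<in> {va, vb, vc} \<and> w i \<noteq> w (cyc_next m i))"

definition swap_bc :: "bit ^ 2 \<Rightarrow> bit ^ 2" where
  "swap_bc x = (if x = vb then vc else if x = vc then vb else x)"

text \<open>A choice (identity / inversion) for each bc-piece of \<lambda>: a boolean flag per position
  which is constant along each bc-piece, i.e. equal at cyclically consecutive
  positions both not labelled a.\<close>

definition piece_choice :: "nat \<Rightarrow> (nat \<Rightarrow> bit ^ 2) \<Rightarrow> (nat \<Rightarrow> bool) \<Rightarrow> bool" where
  "piece_choice m w \<phi> \<longleftrightarrow>
     (\<forall>i\<in>{1..m}. w i \<noteq> va \<and> w (cyc_next m i) \<noteq> va \<longrightarrow> \<phi> i = \<phi> (cyc_next m i))"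

definition invert_pieces :: "(nat \<Rightarrow> bool) \<Rightarrow> (nat \<Rightarrow> bit ^ 2) \<Rightarrow> nat \<Rightarrow> bit ^ 2" where
  "invert_pieces \<phi> w = (\<lambda>i. if \<phi> i then swap_bc (w i) else w i)"

text \<open>Identification of the link of {p_i, q_j} in wed_{p,q} P_m with P_m:
  p_{3-i} \<mapsto> p, q_{3-j} \<mapsto> q, identity elsewhere (we give the inverse map).\<close>

definition link_vertex :: "nat \<Rightarrow> nat \<Rightarrow> nat \<Rightarrow> nat \<Rightarrow> nat \<Rightarrow> nat \<times> nat" where
  "link_vertex p q i j v = (if v = p then (p, 3 - i) else if v = q then (q, 3 - j) else (v, 0))"

text \<open>proj_{p_i,q_j} \<Lambda> \<simeq> \<lambda>: there is a linear isomorphism of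
  Z_2^4 / <\<Lambda>(p_i), \<Lambda>(q_j)> onto Z_2^2 (given as a surjective linear map Z_2^4 \<rightarrow> Z_2^2,
  i.e. a 2x4 matrix, with kernel exactly that span) carrying the projected map to \<lambda>.
  Composing with GL(2,Z_2) is absorbed into the choice of the isomorphism.\<close>

definition proj_DJ_eq ::
  "nat \<Rightarrow> nat \<Rightarrow> nat \<Rightarrow> (nat \<times> nat \<Rightarrow> bit ^ 4) \<Rightarrow> nat \<Rightarrow> nat \<Rightarrow> (nat \<Rightarrow> bit ^ 2) \<Rightarrow> bool" where
  "proj_DJ_eq m p q \<Lambda> i j w \<longleftrightarrow>
     (\<exists>M :: bit ^ 4 ^ 2.
        surj (\<lambda>x. M *v x) \<and>
        {x. M *v x = 0} = vec.span {\<Lambda> (p, i), \<Lambda> (q, j)} \<and>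
        (\<forall>v\<in>{1..m}. M *v \<Lambda> (link_vertex p q i j v) = w v))"

end

theory Submission
  imports Defs
begin

text \<open>Label an ordinary vertex v of the wedge by (l1 v, [phi v], [psi v]) in Z_2^4, with both
  flags cleared when l1 v = a, and send p_i to e_3 + [i = 1] e_1 and q_j to e_4 + [j = 1] e_1.
  The projection along {p_i, q_j} given by (x1, x2, x3, x4) |-> (x1 + [i = 1] x3 + [j = 1] x4, x2)
  fixes a and swaps b and c exactly where the selected flags are set, which produces the four
  words of the square. Linear independence only has to be checked on the maximal faces of the
  wedge: {p_1, p_2, w, q_j} for a neighbour w of p, the analogous sets at q, and
  {v, v', p_i, q_j} for an edge v v' of P_m. It holds because adjacent labels differ and the
  flags are constant along bc-pieces.\<close>

lemma vec_bit_add_self [simp]: "(x::bit^'n) + x = 0"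
  by (simp add: vec_eq_iff)

lemma vec_bit_diff_eq_add [simp]: "(x::bit^'n) - y = x + y"
  by (simp add: vec_eq_iff)

lemma vec_bit_add_eq_0_iff: "(x::bit^'n) + y = 0 \<longleftrightarrow> x = y"
  by (metis add.assoc add_0 vec_bit_add_self)

lemma ex_bit_iff: "(\<exists>k::bit. P k) \<longleftrightarrow> P 0 \<or> P 1"
  by (metis bit_not_one_iff)

lemma vec_bit_span_insert:
  "x \<in> vec.span (insert u S) \<longleftrightarrow> x \<in> vec.span S \<or> x + (u::bit^'n) \<in> vec.span S"
  by (simp add: vec.span_insert ex_bit_iff)

definition nonzero_subsums :: "bit^'n \<Rightarrow> bit^'n \<Rightarrow> bit^'n \<Rightarrow> bit^'n \<Rightarrow> bool" where
  "nonzero_subsums x y z w \<longleftrightarrow> x \<noteq> 0 \<and> y \<noteq> 0 \<and> z \<noteq> 0 \<and> w \<noteq> 0 \<and>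
     x + y \<noteq> 0 \<and> x + z \<noteq> 0 \<and> x + w \<noteq> 0 \<and> y + z \<noteq> 0 \<and> y + w \<noteq> 0 \<and> z + w \<noteq> 0 \<and>
     x + y + z \<noteq> 0 \<and> x + y + w \<noteq> 0 \<and> x + z + w \<noteq> 0 \<and> y + z + w \<noteq> 0 \<and> x + y + z + w \<noteq> 0"

lemma independent_if_nonzero_subsums:
  "nonzero_subsums x y z w \<Longrightarrow> vec.independent {x, y, z, w}"
  unfolding nonzero_subsums_def
  by (simp add: vec.independent_insert vec_bit_span_insert vec_bit_add_eq_0_iff)

lemma inj_on_independent_if_nonzero_subsums:
  assumes "\<tau> \<subseteq> {y1, y2, y3, y4}" and "nonzero_subsums (L y1) (L y2) (L y3) (L y4)"
  shows "inj_on L \<tau> \<and> vec.independent (L ` \<tau>)"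
proof
  have "L y1 \<noteq> L y2" "L y1 \<noteq> L y3" "L y1 \<noteq> L y4" "L y2 \<noteq> L y3" "L y2 \<noteq> L y4" "L y3 \<noteq> L y4"
    using assms(2) unfolding nonzero_subsums_def by (simp_all add: vec_bit_add_eq_0_iff)
  then have "inj_on L {y1, y2, y3, y4}"
    by (auto simp: inj_on_def)
  then show "inj_on L \<tau>"
    using assms(1) by (rule inj_on_subset)
  have "L ` \<tau> \<subseteq> {L y1, L y2, L y3, L y4}"
    using assms(1) by auto
  then show "vec.independent (L ` \<tau>)"
    using independent_if_nonzero_subsums[OF assms(2)] vec.independent_mono by blast
qed

definition vec4 :: "bit \<Rightarrow> bit \<Rightarrow> bit \<Rightarrow> bit \<Rightarrow> bit^4" where
  "vec4 a b c d = (\<chi> i. if i = 1 then a else if i = 2 then b else if i = 3 then c else d)"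

lemma vec4_nth [simp]:
  "vec4 a b c d $ 1 = a" "vec4 a b c d $ 2 = b" "vec4 a b c d $ 3 = c" "vec4 a b c d $ 4 = d"
  by (simp_all add: vec4_def)

lemma vec4_eq_0_iff [simp]: "vec4 a b c d = 0 \<longleftrightarrow> a = 0 \<and> b = 0 \<and> c = 0 \<and> d = 0"
  by (auto simp: vec_eq_iff forall_4)

lemma vec4_add [simp]: "vec4 a b c d + vec4 a' b' c' d' = vec4 (a + a') (b + b') (c + c') (d + d')"
  by (simp add: vec_eq_iff forall_4)

lemma vec4_cases: obtains a b c d where "(x::bit^4) = vec4 a b c d"
proof
  show "x = vec4 (x$1) (x$2) (x$3) (x$4)"
    by (simp add: vec_eq_iff forall_4)
qed

lemma vec2_eq_iff: "(vector [a, b] :: bit^2) = x \<longleftrightarrow> a = x$1 \<and> b = x$2"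
  by (auto simp: vec_eq_iff forall_2)

lemma va_nth [simp]: "va$1 = 1" "va$2 = 0"
  and vb_nth [simp]: "vb$1 = 0" "vb$2 = 1"
  and vc_nth [simp]: "vc$1 = 1" "vc$2 = 1"
  by (simp_all add: va_def vb_def vc_def)

lemma va_vb_vc_distinct [simp]: "va \<noteq> vb" "vb \<noteq> va" "va \<noteq> vc" "vc \<noteq> va" "vb \<noteq> vc" "vc \<noteq> vb"
  by (simp_all add: vec_eq_iff forall_2)

lemma swap_bc_simps [simp]: "swap_bc va = va" "swap_bc vb = vc" "swap_bc vc = vb"
  by (simp_all add: swap_bc_def)

lemma invert_pieces_False [simp]: "invert_pieces (\<lambda>_. False) w = w"
  by (simp add: invert_pieces_def)

definition wed_contract :: "'v \<Rightarrow> 'v \<Rightarrow> ('v \<times> nat) set \<Rightarrow> 'v set" where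
  "wed_contract p q \<tau> =
     {v. ((v, 0) \<in> \<tau> \<and> v \<notin> {p, q}) \<or> (v \<in> {p, q} \<and> (v, 1) \<in> \<tau> \<and> (v, 2) \<in> \<tau>)}"

lemma wed_replace_subset_iff: "wed_replace p q \<sigma> \<subseteq> \<tau> \<longleftrightarrow> \<sigma> \<subseteq> wed_contract p q \<tau>"
  unfolding wed_replace_def wed_contract_def by auto

lemma min_nonface_subset:
  assumes "finite V" and "S \<subseteq> V" and "S \<notin> K"
  shows "\<exists>\<sigma>\<in>min_nonfaces V K. \<sigma> \<subseteq> S"
proof -
  obtain \<sigma> where \<sigma>: "\<sigma> \<subseteq> S" "\<sigma> \<notin> K"
    and least: "\<And>\<sigma>'. \<sigma>' \<subseteq> S \<Longrightarrow> \<sigma>' \<notin> K \<Longrightarrow> card \<sigma> \<le> card \<sigma>'"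
    using ex_has_least_nat[of "\<lambda>\<sigma>. \<sigma> \<subseteq> S \<and> \<sigma> \<notin> K" S card] assms(3) by (metis order_refl)
  have "finite \<sigma>"
    using \<sigma>(1) assms(1,2) by (meson finite_subset)
  then have "\<tau> \<in> K" if "\<tau> \<subset> \<sigma>" for \<tau>
  proof -
    have "card \<tau> < card \<sigma>"
      using \<open>finite \<sigma>\<close> that by (rule psubset_card_mono)
    moreover have "\<tau> \<subseteq> S"
      using that \<sigma>(1) by blast
    ultimately show ?thesis
      using least[of \<tau>] by linarith
  qed
  then have "\<sigma> \<in> min_nonfaces V K"
    using \<sigma> assms(2) unfolding min_nonfaces_def by blast
  with \<sigma>(1) show ?thesis by blast
qed

lemma wed_contract_face:
  assumes "finite V" and "\<tau> \<in> wed V K p q"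
  shows "wed_contract p q \<tau> \<inter> V \<in> K"
proof (rule ccontr)
  assume "wed_contract p q \<tau> \<inter> V \<notin> K"
  then obtain \<sigma> where "\<sigma> \<in> min_nonfaces V K" "\<sigma> \<subseteq> wed_contract p q \<tau>"
    using min_nonface_subset[OF assms(1) Int_lower2] by blast
  moreover have "\<forall>\<sigma>\<in>min_nonfaces V K. \<not> wed_replace p q \<sigma> \<subseteq> \<tau>"
    using assms(2) unfolding wed_def by blast
  ultimately show False
    by (simp add: wed_replace_subset_iff)
qed

lemma cyc_next_in: "i \<in> {1..m} \<Longrightarrow> cyc_next m i \<in> {1..m}"
proof -
  assume "i \<in> {1..m}"
  then have "i mod m < m" by simp
  then show ?thesis unfolding cyc_next_def by simp
qed

lemma wed_P_cycle_face_support: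
  assumes \<tau>: "\<tau> \<in> wed {1..m} (P_cycle m) p q" and "p \<in> {1..m}" and "q \<in> {1..m}"
  obtains i where "i \<in> {1..m}"
    and "\<And>v k. (v, k) \<in> \<tau> \<Longrightarrow>
      (k = 0 \<and> v \<in> {i, cyc_next m i} - {p, q}) \<or> (v \<in> {p, q} \<and> k \<in> {1, 2})"
    and "\<And>v. v \<in> {p, q} \<Longrightarrow> (v, 1) \<in> \<tau> \<Longrightarrow> (v, 2) \<in> \<tau> \<Longrightarrow> v \<in> {i, cyc_next m i}"
proof -
  obtain i where i: "i \<in> {1..m}" "wed_contract p q \<tau> \<inter> {1..m} \<subseteq> {i, cyc_next m i}"
    using wed_contract_face[OF finite_atLeastAtMost \<tau>] unfolding P_cycle_def by blast
  have "\<tau> \<subseteq> wed_vertices {1..m} p q"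
    using \<tau> unfolding wed_def by simp
  then have vertex: "(k = 0 \<and> v \<in> {1..m} \<and> v \<notin> {p, q}) \<or> (v \<in> {p, q} \<and> k \<in> {1, 2})"
    if "(v, k) \<in> \<tau>" for v k
    using that unfolding wed_vertices_def by auto
  have "v \<in> {i, cyc_next m i}" if "(v, 0) \<in> \<tau>" for v
  proof -
    have "v \<in> wed_contract p q \<tau> \<inter> {1..m}"
      using vertex[OF that] that unfolding wed_contract_def by simp
    then show ?thesis
      using i(2) by blast
  qed
  then have "(k = 0 \<and> v \<in> {i, cyc_next m i} - {p, q}) \<or> (v \<in> {p, q} \<and> k \<in> {1, 2})"
    if "(v, k) \<in> \<tau>" for v k
    using vertex[OF that] that by auto
  moreover have "v \<in> {i, cyc_next m i}" if "v \<in> {p, q}" "(v, 1) \<in> \<tau>" "(v, 2) \<in> \<tau>" for v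
  proof -
    have "v \<in> wed_contract p q \<tau> \<inter> {1..m}"
      using that assms(2,3) unfolding wed_contract_def by auto
    then show ?thesis
      using i(2) by blast
  qed
  ultimately show thesis
    using i(1) that by blast
qed

lemma wed_P_cycle_face_cases:
  assumes \<tau>: "\<tau> \<in> wed {1..m} (P_cycle m) p q"
    and "p \<in> {1..m}" and "q \<in> {1..m}" and "p \<noteq> q"
    and not_edge: "\<And>i. i \<in> {1..m} \<Longrightarrow> {p, q} \<noteq> {i, cyc_next m i}"
  obtains (at_p) i w j where "i \<in> {1..m}" "{p, w} = {i, cyc_next m i}" "j \<in> {1, 2}"
      "\<tau> \<subseteq> {(p, 1), (p, 2), (w, 0), (q, j)}"
    | (at_q) i w j where "i \<in> {1..m}" "{q, w} = {i, cyc_next m i}" "j \<in> {1, 2}"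
      "\<tau> \<subseteq> {(q, 1), (q, 2), (w, 0), (p, j)}"
    | (along_edge) i j k where "i \<in> {1..m}" "j \<in> {1, 2}" "k \<in> {1, 2}"
      "\<tau> \<subseteq> {(i, 0), (cyc_next m i, 0), (p, j), (q, k)}"
proof -
  obtain i where i: "i \<in> {1..m}"
    and vertex: "\<And>v k. (v, k) \<in> \<tau> \<Longrightarrow>
      (k = 0 \<and> v \<in> {i, cyc_next m i} - {p, q}) \<or> (v \<in> {p, q} \<and> k \<in> {1, 2})"
    and doubled: "\<And>v. v \<in> {p, q} \<Longrightarrow> (v, 1) \<in> \<tau> \<Longrightarrow> (v, 2) \<in> \<tau> \<Longrightarrow> v \<in> {i, cyc_next m i}"
    using wed_P_cycle_face_support[OF assms(1-3)] by blast
  define jp where "jp = (if (p, 1) \<in> \<tau> then 1 else 2 :: nat)"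
  define jq where "jq = (if (q, 1) \<in> \<tau> then 1 else 2 :: nat)"
  have jp: "jp \<in> {1, 2}" and jq: "jq \<in> {1, 2}"
    unfolding jp_def jq_def by simp_all
  have not_both: "\<not> (p \<in> {i, cyc_next m i} \<and> q \<in> {i, cyc_next m i})"
    using not_edge[OF i(1)] \<open>p \<noteq> q\<close> by auto
  consider "p \<in> {i, cyc_next m i}" | "q \<in> {i, cyc_next m i}" | "p \<notin> {i, cyc_next m i}" "q \<notin> {i, cyc_next m i}"
    by blast
  then show thesis
  proof cases
    case 1
    define w where "w = (if p = i then cyc_next m i else i)"
    have "{p, w} = {i, cyc_next m i}"
      using 1 unfolding w_def by auto
    moreover have "\<tau> \<subseteq> {(p, 1), (p, 2), (w, 0), (q, jq)}"
    proof (rule subrelI)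
      fix v k assume vk: "(v, k) \<in> \<tau>"
      show "(v, k) \<in> {(p, 1), (p, 2), (w, 0), (q, jq)}"
        using vertex[OF vk] vk doubled[of q] 1 not_both unfolding w_def jq_def by auto
    qed
    ultimately show thesis
      by (rule at_p[OF i(1) _ jq])
  next
    case 2
    define w where "w = (if q = i then cyc_next m i else i)"
    have "{q, w} = {i, cyc_next m i}"
      using 2 unfolding w_def by auto
    moreover have "\<tau> \<subseteq> {(q, 1), (q, 2), (w, 0), (p, jp)}"
    proof (rule subrelI)
      fix v k assume vk: "(v, k) \<in> \<tau>"
      show "(v, k) \<in> {(q, 1), (q, 2), (w, 0), (p, jp)}"
        using vertex[OF vk] vk doubled[of p] 2 not_both unfolding w_def jp_def by auto
    qed
    ultimately show thesis
      by (rule at_q[OF i(1) _ jp])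
  next
    case 3
    have "\<tau> \<subseteq> {(i, 0), (cyc_next m i, 0), (p, jp), (q, jq)}"
    proof (rule subrelI)
      fix v k assume vk: "(v, k) \<in> \<tau>"
      show "(v, k) \<in> {(i, 0), (cyc_next m i, 0), (p, jp), (q, jq)}"
        using vertex[OF vk] vk doubled[of p] doubled[of q] 3 unfolding jp_def jq_def by auto
    qed
    then show thesis
      by (rule along_edge[OF i(1) jp jq])
  qed
qed

definition lift_label :: "bit^2 \<Rightarrow> bool \<Rightarrow> bool \<Rightarrow> bit^4" where
  "lift_label x f g = vec4 (x$1) (x$2) (of_bool (f \<and> x \<noteq> va)) (of_bool (g \<and> x \<noteq> va))"

text \<open>A vertex (v, k) with k \<noteq> 0 and v \<noteq> p of the wedge is a copy of q.\<close>

definition square_realizer ::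
    "(nat \<Rightarrow> bit^2) \<Rightarrow> (nat \<Rightarrow> bool) \<Rightarrow> (nat \<Rightarrow> bool) \<Rightarrow> nat \<Rightarrow> nat \<times> nat \<Rightarrow> bit^4" where
  "square_realizer l \<phi> \<psi> p = (\<lambda>(v, k).
     if k = 0 then lift_label (l v) (\<phi> v) (\<psi> v)
     else if v = p then vec4 (of_bool (k = 1)) 0 1 0
     else vec4 (of_bool (k = 1)) 0 0 1)"

lemma square_realizer_simps:
  "square_realizer l \<phi> \<psi> p (v, 0) = lift_label (l v) (\<phi> v) (\<psi> v)"
  "k \<noteq> 0 \<Longrightarrow> square_realizer l \<phi> \<psi> p (p, k) = vec4 (of_bool (k = 1)) 0 1 0"
  "k \<noteq> 0 \<Longrightarrow> q \<noteq> p \<Longrightarrow> square_realizer l \<phi> \<psi> p (q, k) = vec4 (of_bool (k = 1)) 0 0 1"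
  by (simp_all add: square_realizer_def)

lemma lift_label_simps [simp]:
  "lift_label va f g = vec4 1 0 0 0"
  "lift_label vb f g = vec4 0 1 (of_bool f) (of_bool g)"
  "lift_label vc f g = vec4 1 1 (of_bool f) (of_bool g)"
  by (simp_all add: lift_label_def)

lemma nonzero_subsums_at_p:
  "x \<in> {vb, vc} \<Longrightarrow>
    nonzero_subsums (vec4 1 0 1 0) (vec4 0 0 1 0) (lift_label x f g) (vec4 c 0 0 1)"
  by (cases c; cases f; cases g) (auto simp: nonzero_subsums_def)

lemma nonzero_subsums_at_q:
  "x \<in> {vb, vc} \<Longrightarrow>
    nonzero_subsums (vec4 1 0 0 1) (vec4 0 0 0 1) (lift_label x f g) (vec4 c 0 1 0)"
  by (cases c; cases f; cases g) (auto simp: nonzero_subsums_def)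

lemma nonzero_subsums_along_edge:
  assumes "x \<in> {va, vb, vc}" and "y \<in> {va, vb, vc}" and "x \<noteq> y"
    and "x \<noteq> va \<and> y \<noteq> va \<longrightarrow> f = f' \<and> g = g'"
  shows "nonzero_subsums (lift_label x f g) (lift_label y f' g') (vec4 c 0 1 0) (vec4 d 0 0 1)"
proof -
  consider "x = va" "y \<in> {vb, vc}" | "y = va" "x \<in> {vb, vc}"
    | "x \<in> {vb, vc}" "y \<in> {vb, vc}" "f' = f" "g' = g"
    using assms by auto
  then show ?thesis
  proof cases
    case 1
    then show ?thesis
      by (cases c; cases d; cases f'; cases g') (auto simp: nonzero_subsums_def)
  next
    case 2
    then show ?thesis
      by (cases c; cases d; cases f; cases g) (auto simp: nonzero_subsums_def)
  next
    case 3
    then show ?thesis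
      using assms(3) by (cases c; cases d; cases f; cases g) (auto simp: nonzero_subsums_def)
  qed
qed

lemma char_map_square_realizer:
  assumes word: "char_word m l"
    and ends: "p \<in> {1..m}" "q \<in> {1..m}" "p \<noteq> q" and ends_a: "l p = va" "l q = va"
    and choices: "piece_choice m l \<phi>" "piece_choice m l \<psi>"
  shows "char_map (wed {1..m} (P_cycle m) p q) (square_realizer l \<phi> \<psi> p)"
  unfolding char_map_def
proof
  fix \<tau> assume \<tau>: "\<tau> \<in> wed {1..m} (P_cycle m) p q"
  let ?\<Lambda> = "square_realizer l \<phi> \<psi> p"
  have labels: "l v \<in> {va, vb, vc}" if "v \<in> {1..m}" for v
    using word that unfolding char_word_def by blast
  have edge_labels: "l i \<noteq> l (cyc_next m i)" if "i \<in> {1..m}" for i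
    using word that unfolding char_word_def by blast
  have not_edge: "{p, q} \<noteq> {i, cyc_next m i}" if "i \<in> {1..m}" for i
    using edge_labels[OF that] ends_a by (auto simp: doubleton_eq_iff)
  have neighbour_label: "l w \<in> {vb, vc}" if "i \<in> {1..m}" "{v, w} = {i, cyc_next m i}" "l v = va" for i v w
  proof -
    have "w \<in> {1..m}" and "l w \<noteq> l v"
      using that edge_labels[OF that(1)] cyc_next_in[OF that(1)] by (auto simp: doubleton_eq_iff)
    then show ?thesis
      using labels that(3) by fastforce
  qed
  show "inj_on ?\<Lambda> \<tau> \<and> vec.independent (?\<Lambda> ` \<tau>)"
  proof (rule wed_P_cycle_face_cases[OF \<tau> ends not_edge])
    fix i w j
    assume at_p: "i \<in> {1..m}" "{p, w} = {i, cyc_next m i}" "j \<in> {1, 2}"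
      "\<tau> \<subseteq> {(p, 1), (p, 2), (w, 0), (q, j)}"
    then show ?thesis
      using nonzero_subsums_at_p[OF neighbour_label[OF at_p(1,2) ends_a(1)]] ends(3)
      by (intro inj_on_independent_if_nonzero_subsums[OF at_p(4)]) (auto simp: square_realizer_simps)
  next
    fix i w j
    assume at_q: "i \<in> {1..m}" "{q, w} = {i, cyc_next m i}" "j \<in> {1, 2}"
      "\<tau> \<subseteq> {(q, 1), (q, 2), (w, 0), (p, j)}"
    then show ?thesis
      using nonzero_subsums_at_q[OF neighbour_label[OF at_q(1,2) ends_a(2)]] ends(3)
      by (intro inj_on_independent_if_nonzero_subsums[OF at_q(4)]) (auto simp: square_realizer_simps)
  next
    fix i j k
    assume along_edge: "i \<in> {1..m}" "j \<in> {1, 2}" "k \<in> {1, 2}"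
      "\<tau> \<subseteq> {(i, 0), (cyc_next m i, 0), (p, j), (q, k)}"
    have "l i \<noteq> va \<and> l (cyc_next m i) \<noteq> va \<longrightarrow>
        \<phi> i = \<phi> (cyc_next m i) \<and> \<psi> i = \<psi> (cyc_next m i)"
      using choices along_edge(1) unfolding piece_choice_def by blast
    then show ?thesis
      using nonzero_subsums_along_edge[OF labels[OF along_edge(1)] labels[OF cyc_next_in[OF along_edge(1)]]
          edge_labels[OF along_edge(1)]] along_edge(2,3) ends(3)
      by (intro inj_on_independent_if_nonzero_subsums[OF along_edge(4)]) (auto simp: square_realizer_simps)
  qed
qed

definition proj_matrix :: "bit \<Rightarrow> bit \<Rightarrow> bit^4^2" where
  "proj_matrix c d = vector [vec4 1 0 c d, vec4 0 1 0 0]"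

lemma proj_matrix_mult:
  "proj_matrix c d *v vec4 x1 x2 x3 x4 = vector [x1 + c * x3 + d * x4, x2]"
  unfolding vec_eq_iff forall_2 matrix_vector_mult_def sum_4 by (simp add: proj_matrix_def)

lemma proj_matrix_surj: "surj (\<lambda>x. proj_matrix c d *v x)"
proof (rule surjI)
  fix y :: "bit^2"
  show "proj_matrix c d *v vec4 (y$1) (y$2) 0 0 = y"
    by (simp add: proj_matrix_mult vec2_eq_iff)
qed

lemma proj_matrix_kernel:
  "{x. proj_matrix c d *v x = 0} = vec.span {vec4 c 0 1 0, vec4 d 0 0 1}"
proof (rule set_eqI)
  fix x :: "bit^4"
  obtain a b e f where x: "x = vec4 a b e f"
    by (rule vec4_cases)
  show "x \<in> {x. proj_matrix c d *v x = 0} \<longleftrightarrow> x \<in> vec.span {vec4 c 0 1 0, vec4 d 0 0 1}"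
    unfolding x vec_bit_span_insert vec.span_empty
    by (cases a; cases b; cases e; cases f; cases c; cases d)
       (simp_all add: proj_matrix_mult vec2_eq_iff[where x = 0, simplified])
qed

lemma proj_matrix_lift_label:
  assumes "x \<in> {va, vb, vc}"
  shows "proj_matrix (of_bool s) (of_bool t) *v lift_label x f g =
    (if t \<and> g then swap_bc else id) ((if s \<and> f then swap_bc else id) x)"
  using assms
  by (elim insertE emptyE; cases s; cases t; cases f; cases g)
     (simp_all add: proj_matrix_mult vec2_eq_iff)

lemma proj_DJ_eq_square_realizer:
  assumes "i \<in> {1, 2}" and "j \<in> {1, 2}" and "p \<noteq> q" and "l p = va" and "l q = va"
    and labels: "\<forall>v\<in>{1..m}. l v \<in> {va, vb, vc}"
  shows "proj_DJ_eq m p q (square_realizer l \<phi> \<psi> p) i j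
    (invert_pieces (\<lambda>v. j = 1 \<and> \<psi> v) (invert_pieces (\<lambda>v. i = 1 \<and> \<phi> v) l))"
  unfolding proj_DJ_eq_def
proof (intro exI[of _ "proj_matrix (of_bool (i = 1)) (of_bool (j = 1))"] conjI ballI)
  let ?M = "proj_matrix (of_bool (i = 1)) (of_bool (j = 1))"
  let ?\<Lambda> = "square_realizer l \<phi> \<psi> p"
  show "surj (\<lambda>x. ?M *v x)"
    by (rule proj_matrix_surj)
  have "?\<Lambda> (p, i) = vec4 (of_bool (i = 1)) 0 1 0" "?\<Lambda> (q, j) = vec4 (of_bool (j = 1)) 0 0 1"
    using assms(1-3) by (auto simp: square_realizer_simps)
  then show "{x. ?M *v x = 0} = vec.span {?\<Lambda> (p, i), ?\<Lambda> (q, j)}"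
    by (simp only: proj_matrix_kernel)
  fix v assume v: "v \<in> {1..m}"
  show "?M *v ?\<Lambda> (link_vertex p q i j v) =
      invert_pieces (\<lambda>v. j = 1 \<and> \<psi> v) (invert_pieces (\<lambda>v. i = 1 \<and> \<phi> v) l) v"
  proof (cases "v \<in> {p, q}")
    case True
    then show ?thesis
      using assms(1-5)
      by (auto simp: link_vertex_def square_realizer_def invert_pieces_def proj_matrix_mult vec2_eq_iff)
  next
    case False
    then have "?\<Lambda> (link_vertex p q i j v) = lift_label (l v) (\<phi> v) (\<psi> v)"
      by (simp add: link_vertex_def square_realizer_def)
    then show ?thesis
      using proj_matrix_lift_label[of "l v"] labels v by (simp add: invert_pieces_def)
  qed
qed

theorem mainTheorem4:
  fixes m p q :: nat and l1 :: "nat \<Rightarrow> bit ^ 2" and \<phi> \<psi> :: "nat \<Rightarrow> bool"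
  assumes "m \<ge> 3"
    and "char_word m l1"
    and "p \<in> {1..m}" and "q \<in> {1..m}" and "p \<noteq> q"
    and "l1 p = va" and "l1 q = va"
    and "piece_choice m l1 \<phi>" and "piece_choice m l1 \<psi>"
  shows "\<exists>\<Lambda> :: nat \<times> nat \<Rightarrow> bit ^ 4.
           char_map (wed {1..m} (P_cycle m) p q) \<Lambda> \<and>
           proj_DJ_eq m p q \<Lambda> 2 2 l1 \<and>
           proj_DJ_eq m p q \<Lambda> 1 2 (invert_pieces \<phi> l1) \<and>
           proj_DJ_eq m p q \<Lambda> 2 1 (invert_pieces \<psi> l1) \<and>
           proj_DJ_eq m p q \<Lambda> 1 1 (invert_pieces \<psi> (invert_pieces \<phi> l1))"
proof (intro exI conjI)
  let ?\<Lambda> = "square_realizer l1 \<phi> \<psi> p"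
  have labels: "\<forall>v\<in>{1..m}. l1 v \<in> {va, vb, vc}"
    using assms(2) unfolding char_word_def by blast
  note proj = proj_DJ_eq_square_realizer[where \<phi> = \<phi> and \<psi> = \<psi>, OF _ _ assms(5-7) labels]
  show "char_map (wed {1..m} (P_cycle m) p q) ?\<Lambda>"
    using assms(2-9) by (rule char_map_square_realizer)
  show "proj_DJ_eq m p q ?\<Lambda> 2 2 l1"
    using proj[of 2 2] by simp
  show "proj_DJ_eq m p q ?\<Lambda> 1 2 (invert_pieces \<phi> l1)"
    using proj[of 1 2] by simp
  show "proj_DJ_eq m p q ?\<Lambda> 2 1 (invert_pieces \<psi> l1)"
    using proj[of 2 1] by simp
  show "proj_DJ_eq m p q ?\<Lambda> 1 1 (invert_pieces \<psi> (invert_pieces \<phi> l1))"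
    using proj[of 1 1] by simp
qed

end
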